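(* Let $V\in\mathbb{C}$ and let $A(V,0,\pi)$ be the operator in $L_2(0,1)$ acting by $A(V,0,\pi)\psi=i\psi'+V\big[\psi(0)-\tfrac{i}{2}\langle\psi,V\rangle\big]$ on the domain of $\psi\in W_2^1(0,1)$ with $\psi(1)=-[\psi(0)-i\langle\psi,V\rangle]$, where $\langle\psi,V\rangle=\overline{V}\int_0^1\psi(x)\,dx$ (the potential is the constant function $V$). Then $\lambda=0$ is an eigenvalue of $A(V,0,\pi)$ if and only if $V=2i$. In this case $\lambda=0$ has multiplicity $2$, and the corresponding orthogonal eigenfunctions are $\psi_1(x)=1$ and $\psi_2(x)=x-\tfrac12$.
   Context: $\langle f,g\rangle=\int_0^1 f\bar g\,dx$; $W_2^1(0,1)$ is the Sobolev space. *)

theory Defs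
  imports "HOL-Analysis.Analysis"
begin

text \<open>Functions on [0,1] are modelled as real => complex; only values on [0,1] matter.
  phi is a weak (L2) derivative of psi: phi is measurable, square integrable on [0,1],
  and psi(x) = psi(0) + integral of phi over [0,x] for all x in [0,1]
  (psi is then the continuous representative of a W_2^1(0,1) function).\<close>
definition is_wderiv :: "(real \<Rightarrow> complex) \<Rightarrow> (real \<Rightarrow> complex) \<Rightarrow> bool" where
  "is_wderiv psi phi \<longleftrightarrow>
     phi \<in> borel_measurable lborel \<and>
     set_integrable lborel {0..1} (\<lambda>x. (cmod (phi x))\<^sup>2) \<and>
     (\<forall>x\<in>{0..1}. psi x = psi 0 + (LINT t:{0..x}|lborel. phi t))"

definition W21 :: "(real \<Rightarrow> complex) \<Rightarrow> bool" where
  "W21 psi \<longleftrightarrow> (\<exists>phi. is_wderiv psi phi)"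

definition L2ip :: "(real \<Rightarrow> complex) \<Rightarrow> (real \<Rightarrow> complex) \<Rightarrow> complex" where
  "L2ip f g = (LINT x:{0..1}|lborel. f x * cnj (g x))"

definition ipV :: "(real \<Rightarrow> complex) \<Rightarrow> complex \<Rightarrow> complex" where
  "ipV psi V = L2ip psi (\<lambda>_. V)"

definition Adom :: "complex \<Rightarrow> (real \<Rightarrow> complex) \<Rightarrow> bool" where
  "Adom V psi \<longleftrightarrow> W21 psi \<and> psi 1 = - (psi 0 - \<i> * ipV psi V)"

text \<open>Aop V psi f: psi is in the domain and A(V,0,pi) psi = f as elements of L2(0,1),
  i.e. almost everywhere on [0,1].\<close>
definition Aop :: "complex \<Rightarrow> (real \<Rightarrow> complex) \<Rightarrow> (real \<Rightarrow> complex) \<Rightarrow> bool" where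
  "Aop V psi f \<longleftrightarrow> Adom V psi \<and>
     (\<exists>phi. is_wderiv psi phi \<and>
        (AE x in lborel. x \<in> {0..1} \<longrightarrow>
           \<i> * phi x + V * (psi 0 - (\<i> / 2) * ipV psi V) = f x))"

definition L2zero :: "(real \<Rightarrow> complex) \<Rightarrow> bool" where
  "L2zero f \<longleftrightarrow> (AE x in lborel. x \<in> {0..1} \<longrightarrow> f x = 0)"

definition is_eigenvalue :: "complex \<Rightarrow> complex \<Rightarrow> bool" where
  "is_eigenvalue V lam \<longleftrightarrow> (\<exists>psi. \<not> L2zero psi \<and> Aop V psi (\<lambda>x. lam * psi x))"

end

(* On [0,1] the operator acts as i d/dx plus a constant (the rank-one term), so every psi with
   affine image -- in particular every kernel vector, and every psi whose image lies in the
   kernel -- is a polynomial of degree at most 2, and the boundary condition and the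
   rank-one term become linear equations in its coefficients.
   For psi = P + beta x in the kernel, the boundary condition says that (2 - i conj V) times
   the mean P + beta/2 of psi vanishes.  If V <> 2i the mean is therefore 0, and the
   constant term then gives (V - 2i) P = 0, so psi = 0.  If V = 2i both equations hold
   identically, and the kernel consists of all affine functions.
   If A psi = chi with chi in the kernel, the boundary condition kills the quadratic
   coefficient of psi, and then chi = 0: there are no Jordan chains. *)

theory Submission
  imports Defs
begin

lemma set_integral_quadratic:
  fixes p q r :: complex and x :: real
  assumes "0 \<le> x"
  shows "(LINT t:{0..x}|lborel. p + q * complex_of_real t + r * (complex_of_real t)\<^sup>2)
     = p * x + q * x\<^sup>2 / 2 + r * x ^ 3 / 3"
proof -
  define F where "F t = p * t + q * (complex_of_real t)\<^sup>2 / 2 + r * (complex_of_real t) ^ 3 / 3"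
    for t
  have F': "(F has_vector_derivative p + q * complex_of_real t + r * (complex_of_real t)\<^sup>2)
      (at t within S)" for t S
    unfolding has_vector_derivative_def F_def
    by (auto intro!: derivative_eq_intros ext simp: scaleR_conv_of_real field_simps power2_eq_square)
  have "(LBINT t=ereal 0..ereal x. p + q * complex_of_real t + r * (complex_of_real t)\<^sup>2)
      = F x - F 0"
    by (rule interval_integral_FTC_finite[OF _ F']) (intro continuous_intros)
  then show ?thesis
    by (simp add: interval_integral_Icc[OF assms] F_def)
qed

lemma is_wderiv_AE_eq_integral:
  assumes "is_wderiv psi phi" "AE x in lborel. x \<in> {0..1} \<longrightarrow> phi x = g x"
    and "g \<in> borel_measurable lborel" "x \<in> {0..1}"
  shows "psi x = psi 0 + (LINT t:{0..x}|lborel. g t)"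
proof -
  have phi: "phi \<in> borel_measurable lborel"
    and psi: "psi x = psi 0 + (LINT t:{0..x}|lborel. phi t)"
    using assms(1,4) unfolding is_wderiv_def by blast+
  have "(LINT t:{0..x}|lborel. phi t) = (LINT t:{0..x}|lborel. g t)"
  proof (rule set_lebesgue_integral_cong_AE)
    show "AE t\<in>{0..x} in lborel. phi t = g t"
      using assms(2) by eventually_elim (use assms(4) in auto)
  qed (use phi assms(3) in auto)
  with psi show ?thesis
    by simp
qed

lemma is_wderiv_affine:
  assumes "\<forall>x\<in>{0..1}. psi x = a + b * complex_of_real x"
  shows "is_wderiv psi (\<lambda>_. b)"
  unfolding is_wderiv_def
proof (intro conjI ballI)
  show "set_integrable lborel {0..1::real} (\<lambda>x. (cmod b)\<^sup>2)"
    using borel_integrable_atLeastAtMost'[of 0 1 "\<lambda>x. (cmod b)\<^sup>2"] by simp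
  fix x :: real assume x: "x \<in> {0..1}"
  have "(LINT t:{0..x}|lborel. b) = (LINT t:{0..x}|lborel. b + 0 * complex_of_real t + 0 * (complex_of_real t)\<^sup>2)"
    by simp
  also have "\<dots> = b * x"
    using x by (subst set_integral_quadratic) auto
  finally show "psi x = psi 0 + (LINT t:{0..x}|lborel. b)"
    using assms x by simp
qed simp

lemma ipV_quadratic:
  assumes "\<forall>x\<in>{0..1}. psi x = p + q * complex_of_real x + r * (complex_of_real x)\<^sup>2"
  shows "ipV psi V = cnj V * (p + q / 2 + r / 3)"
proof -
  have "ipV psi V = (LINT t:{0..1}|lborel. p * cnj V + (q * cnj V) * complex_of_real t
      + (r * cnj V) * (complex_of_real t)\<^sup>2)"
    unfolding ipV_def L2ip_def
    by (rule set_lebesgue_integral_cong) (use assms in \<open>auto simp: algebra_simps\<close>)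
  also have "\<dots> = cnj V * (p + q / 2 + r / 3)"
    by (subst set_integral_quadratic) (auto simp: algebra_simps)
  finally show ?thesis .
qed

lemma Aop_cong_rhs:
  assumes "Aop V psi f" "\<forall>x\<in>{0..1}. f x = g x"
  shows "Aop V psi g"
proof -
  obtain phi where "Adom V psi" "is_wderiv psi phi"
    and "AE x in lborel. x \<in> {0..1} \<longrightarrow> \<i> * phi x + V * (psi 0 - (\<i> / 2) * ipV psi V) = f x"
    using assms(1) unfolding Aop_def by blast
  moreover from this(3)
  have "AE x in lborel. x \<in> {0..1} \<longrightarrow> \<i> * phi x + V * (psi 0 - (\<i> / 2) * ipV psi V) = g x"
    by eventually_elim (use assms(2) in auto)
  ultimately show ?thesis
    unfolding Aop_def by blast
qed

lemma Aop_affine: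
  assumes psi: "\<forall>x\<in>{0..1}. psi x = a + b * complex_of_real x"
    and bdry: "psi 1 = - (psi 0 - \<i> * ipV psi V)"
  shows "Aop V psi (\<lambda>_. \<i> * b + V * (a - \<i> / 2 * ipV psi V))"
proof -
  have w: "is_wderiv psi (\<lambda>_. b)"
    using psi by (rule is_wderiv_affine)
  have "psi 0 = a"
    using psi by auto
  then have "AE x in lborel. x \<in> {0..1} \<longrightarrow>
      \<i> * b + V * (psi 0 - \<i> / 2 * ipV psi V) = \<i> * b + V * (a - \<i> / 2 * ipV psi V)"
    by simp
  moreover have "Adom V psi"
    unfolding Adom_def W21_def using w bdry by blast
  ultimately show ?thesis
    unfolding Aop_def using w by blast
qed

lemma Aop_affine_rhs_solution:
  assumes A: "Aop V psi f" and f: "\<forall>x\<in>{0..1}. f x = a + c * complex_of_real x"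
  defines "K \<equiv> V * (psi 0 - \<i> / 2 * ipV psi V)"
  shows "\<forall>x\<in>{0..1}.
    psi x = psi 0 - \<i> * (a - K) * complex_of_real x - \<i> * c / 2 * (complex_of_real x)\<^sup>2"
proof
  fix x :: real assume x: "x \<in> {0..1}"
  obtain phi where w: "is_wderiv psi phi"
    and eq: "AE t in lborel. t \<in> {0..1} \<longrightarrow> \<i> * phi t + K = f t"
    using A unfolding Aop_def K_def by blast
  define g where "g t = - \<i> * (a - K) + (- \<i> * c) * complex_of_real t + 0 * (complex_of_real t)\<^sup>2"
    for t
  have "AE t in lborel. t \<in> {0..1} \<longrightarrow> phi t = g t"
    using eq
  proof eventually_elim
    case (elim t)
    show ?case
    proof
      assume "t \<in> {0..1}"
      with elim f have "\<i> * phi t = a + c * complex_of_real t - K"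
        by (simp add: eq_diff_eq)
      moreover have "phi t = - \<i> * (\<i> * phi t)"
        by (simp add: mult.assoc[symmetric])
      ultimately have "phi t = - \<i> * (a + c * complex_of_real t - K)"
        by simp
      then show "phi t = g t"
        by (simp add: g_def algebra_simps)
    qed
  qed
  moreover have "g \<in> borel_measurable lborel"
    unfolding g_def by measurable
  ultimately have "psi x = psi 0 + (LINT t:{0..x}|lborel. g t)"
    using w x by (intro is_wderiv_AE_eq_integral)
  also have "(LINT t:{0..x}|lborel. g t)
      = - \<i> * (a - K) * x + (- \<i> * c) * x\<^sup>2 / 2 + (0::complex) * x ^ 3 / 3"
    unfolding g_def using x by (intro set_integral_quadratic) simp
  finally show "psi x = psi 0 - \<i> * (a - K) * complex_of_real x - \<i> * c / 2 * (complex_of_real x)\<^sup>2"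
    by (simp add: algebra_simps)
qed

lemma Aop_affine_rhs_imp_quadratic:
  assumes A: "Aop V psi f" and f: "\<forall>x\<in>{0..1}. f x = a + c * complex_of_real x"
  obtains P \<beta> \<gamma> where
    "\<forall>x\<in>{0..1}. psi x = P + \<beta> * complex_of_real x + \<gamma> * (complex_of_real x)\<^sup>2"
    "a = \<i> * \<beta> + V * (P - \<i> / 2 * (cnj V * (P + \<beta> / 2 + \<gamma> / 3)))"
    "c = 2 * \<i> * \<gamma>"
    "2 * P + \<beta> + \<gamma> = \<i> * (cnj V * (P + \<beta> / 2 + \<gamma> / 3))"
proof -
  define K where "K = V * (psi 0 - \<i> / 2 * ipV psi V)"
  define \<beta> where "\<beta> = - \<i> * (a - K)"
  define \<gamma> where "\<gamma> = - \<i> * c / 2"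
  have psi: "\<forall>x\<in>{0..1}. psi x = psi 0 + \<beta> * complex_of_real x + \<gamma> * (complex_of_real x)\<^sup>2"
    using Aop_affine_rhs_solution[OF A f] unfolding K_def[symmetric] \<beta>_def \<gamma>_def
    by (simp add: algebra_simps)
  have ip: "ipV psi V = cnj V * (psi 0 + \<beta> / 2 + \<gamma> / 3)"
    using psi by (rule ipV_quadratic)
  have "a = \<i> * \<beta> + K"
    unfolding \<beta>_def by (simp add: algebra_simps)
  moreover have "c = 2 * \<i> * \<gamma>"
    unfolding \<gamma>_def by (simp add: algebra_simps)
  moreover have "psi 1 = psi 0 + \<beta> + \<gamma>"
    using psi[rule_format, of 1] by simp
  with A have "2 * psi 0 + \<beta> + \<gamma> = \<i> * ipV psi V"
    unfolding Aop_def Adom_def by (simp add: algebra_simps)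
  ultimately show thesis
    using psi that unfolding K_def ip by blast
qed

lemma not_L2zero_if_nonzero_on:
  assumes "0 \<le> a" "a < b" "b \<le> 1" "\<forall>x\<in>{a<..<b}. f x \<noteq> 0"
  shows "\<not> L2zero f"
proof
  assume "L2zero f"
  then have "AE x in lborel. x \<notin> {a<..<b}"
    unfolding L2zero_def by eventually_elim (use assms in auto)
  then have "emeasure lborel {a<..<b} = 0"
    by (subst (asm) AE_iff_measurable[where N="{a<..<b}"]) auto
  then show False
    using \<open>a < b\<close> by simp
qed

lemma kernel_coeffs_eq_0:
  fixes P \<beta> V :: complex
  assumes "V \<noteq> 2 * \<i>"
    and const: "0 = \<i> * \<beta> + V * (P - \<i> / 2 * (cnj V * (P + \<beta> / 2)))"
    and bdry: "2 * P + \<beta> = \<i> * (cnj V * (P + \<beta> / 2))"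
  shows "P = 0 \<and> \<beta> = 0"
proof -
  have "2 - \<i> * cnj V \<noteq> 0"
  proof
    assume "2 - \<i> * cnj V = 0"
    have "cnj V = - \<i> * (\<i> * cnj V)"
      by (simp add: mult.assoc[symmetric])
    also have "\<i> * cnj V = 2"
      using \<open>2 - \<i> * cnj V = 0\<close> by simp
    finally have "cnj (cnj V) = cnj (- \<i> * 2)"
      by simp
    then have "V = 2 * \<i>"
      by simp
    with assms(1) show False ..
  qed
  moreover have "(2 - \<i> * cnj V) * (P + \<beta> / 2) = 0"
    using bdry by (simp add: algebra_simps)
  ultimately have mean: "P + \<beta> / 2 = 0"
    by simp
  then have "\<beta> = - 2 * P"
    by (simp add: field_simps eq_neg_iff_add_eq_0)
  with const mean have "(V - 2 * \<i>) * P = 0"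
    by (auto simp: algebra_simps)
  with assms(1) \<open>\<beta> = - 2 * P\<close> show ?thesis
    by simp
qed

lemma Jordan_chain_coeffs_eq_0:
  fixes P \<beta> \<gamma> a c V :: complex
  assumes V: "V = 2 * \<i>"
    and const: "a = \<i> * \<beta> + V * (P - \<i> / 2 * (cnj V * (P + \<beta> / 2 + \<gamma> / 3)))"
    and c: "c = 2 * \<i> * \<gamma>"
    and bdry: "2 * P + \<beta> + \<gamma> = \<i> * (cnj V * (P + \<beta> / 2 + \<gamma> / 3))"
  shows "a = 0 \<and> c = 0"
proof -
  have "cnj V = - 2 * \<i>"
    using V by simp
  then have "2 * P + \<beta> + \<gamma> = 2 * (P + \<beta> / 2 + \<gamma> / 3)"
    using bdry by (simp add: algebra_simps)
  then have "\<gamma> = 0"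
    by (simp add: field_simps)
  with const V \<open>cnj V = - 2 * \<i>\<close> c show ?thesis
    by (simp add: algebra_simps)
qed

lemma Aop_kernel_imp_affine:
  assumes "Aop V psi (\<lambda>x. 0 * psi x)"
  obtains P \<beta> where "\<forall>x\<in>{0..1}. psi x = P + \<beta> * complex_of_real x"
    "0 = \<i> * \<beta> + V * (P - \<i> / 2 * (cnj V * (P + \<beta> / 2)))"
    "2 * P + \<beta> = \<i> * (cnj V * (P + \<beta> / 2))"
proof -
  have "\<forall>x\<in>{0..1}. 0 * psi x = 0 + 0 * complex_of_real x"
    by simp
  with assms obtain P \<beta> \<gamma> where
    psi: "\<forall>x\<in>{0..1}. psi x = P + \<beta> * complex_of_real x + \<gamma> * (complex_of_real x)\<^sup>2"
    and "0 = \<i> * \<beta> + V * (P - \<i> / 2 * (cnj V * (P + \<beta> / 2 + \<gamma> / 3)))"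
    and "0 = 2 * \<i> * \<gamma>"
    and "2 * P + \<beta> + \<gamma> = \<i> * (cnj V * (P + \<beta> / 2 + \<gamma> / 3))"
    by (rule Aop_affine_rhs_imp_quadratic)
  moreover from \<open>0 = 2 * \<i> * \<gamma>\<close> have "\<gamma> = 0"
    by simp
  ultimately show thesis
    by (intro that) auto
qed

lemma Aop_kernel_trivial:
  assumes "V \<noteq> 2 * \<i>" "Aop V psi (\<lambda>x. 0 * psi x)"
  shows "L2zero psi"
proof -
  obtain P \<beta> where psi: "\<forall>x\<in>{0..1}. psi x = P + \<beta> * complex_of_real x"
    and "0 = \<i> * \<beta> + V * (P - \<i> / 2 * (cnj V * (P + \<beta> / 2)))"
    and "2 * P + \<beta> = \<i> * (cnj V * (P + \<beta> / 2))"
    using assms(2) by (rule Aop_kernel_imp_affine)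
  with assms(1) have "P = 0 \<and> \<beta> = 0"
    by (intro kernel_coeffs_eq_0)
  with psi show ?thesis
    unfolding L2zero_def by (intro AE_I2) simp
qed

lemma Aop_2i_kernel_iff_affine:
  assumes V: "V = 2 * \<i>"
  shows "Aop V psi (\<lambda>x. 0 * psi x) \<longleftrightarrow>
    (\<exists>c1 c2. \<forall>x\<in>{0..1}. psi x = c1 * 1 + c2 * (complex_of_real x - 1/2))"
proof
  assume "Aop V psi (\<lambda>x. 0 * psi x)"
  then obtain P \<beta> where psi: "\<forall>x\<in>{0..1}. psi x = P + \<beta> * complex_of_real x"
    by (rule Aop_kernel_imp_affine)
  have "\<forall>x\<in>{0..1}. psi x = (P + \<beta> / 2) * 1 + \<beta> * (complex_of_real x - 1/2)"
    using psi by (simp add: algebra_simps)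
  then show "\<exists>c1 c2. \<forall>x\<in>{0..1}. psi x = c1 * 1 + c2 * (complex_of_real x - 1/2)"
    by blast
next
  assume "\<exists>c1 c2. \<forall>x\<in>{0..1}. psi x = c1 * 1 + c2 * (complex_of_real x - 1/2)"
  then obtain c1 c2 where "\<forall>x\<in>{0..1}. psi x = c1 * 1 + c2 * (complex_of_real x - 1/2)"
    by blast
  then have psi: "\<forall>x\<in>{0..1}. psi x = (c1 - c2 / 2) + c2 * complex_of_real x"
    by (simp add: algebra_simps)
  then have "\<forall>x\<in>{0..1}. psi x = (c1 - c2 / 2) + c2 * complex_of_real x + 0 * (complex_of_real x)\<^sup>2"
    by simp
  then have "ipV psi V = cnj V * ((c1 - c2 / 2) + c2 / 2 + 0 / 3)"
    by (rule ipV_quadratic)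
  then have ip: "ipV psi V = - 2 * \<i> * c1"
    using V by simp
  have "psi 0 = c1 - c2 / 2" "psi 1 = c1 + c2 / 2"
    using psi by auto
  then have "psi 1 = - (psi 0 - \<i> * ipV psi V)"
    unfolding ip by (simp add: algebra_simps)
  with psi have "Aop V psi (\<lambda>_. \<i> * c2 + V * ((c1 - c2 / 2) - \<i> / 2 * ipV psi V))"
    by (rule Aop_affine)
  moreover have "\<i> * c2 + V * ((c1 - c2 / 2) - \<i> / 2 * ipV psi V) = 0"
    using ip V by (simp add: algebra_simps)
  ultimately show "Aop V psi (\<lambda>x. 0 * psi x)"
    by (simp add: Aop_cong_rhs)
qed

lemma Aop_2i_no_Jordan_chain:
  assumes V: "V = 2 * \<i>" and A: "Aop V psi chi" "Aop V chi (\<lambda>x. 0 * chi x)"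
  shows "Aop V psi (\<lambda>x. 0 * psi x)"
proof -
  obtain a c where chi: "\<forall>x\<in>{0..1}. chi x = a + c * complex_of_real x"
    using A(2) by (rule Aop_kernel_imp_affine)
  obtain P \<beta> \<gamma> where
    "a = \<i> * \<beta> + V * (P - \<i> / 2 * (cnj V * (P + \<beta> / 2 + \<gamma> / 3)))"
    "c = 2 * \<i> * \<gamma>"
    "2 * P + \<beta> + \<gamma> = \<i> * (cnj V * (P + \<beta> / 2 + \<gamma> / 3))"
    using A(1) chi by (rule Aop_affine_rhs_imp_quadratic)
  with V have "a = 0 \<and> c = 0"
    by (rule Jordan_chain_coeffs_eq_0)
  with chi have "\<forall>x\<in>{0..1}. chi x = 0 * psi x"
    by simp
  with A(1) show ?thesis
    by (rule Aop_cong_rhs)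
qed

lemma Aop_2i_eigenfunctions:
  assumes V: "V = 2 * \<i>"
  shows "Aop V (\<lambda>x. 1) (\<lambda>x. 0)" "Aop V (\<lambda>x. complex_of_real x - 1/2) (\<lambda>x. 0)"
proof -
  have "Aop V (\<lambda>x. 1) (\<lambda>x. 0 * 1)"
    unfolding Aop_2i_kernel_iff_affine[OF V] by (rule exI[of _ 1], rule exI[of _ 0]) simp
  then show "Aop V (\<lambda>x. 1) (\<lambda>x. 0)"
    by simp
  have "Aop V (\<lambda>x. complex_of_real x - 1/2) (\<lambda>x. 0 * (complex_of_real x - 1/2))"
    unfolding Aop_2i_kernel_iff_affine[OF V] by (rule exI[of _ 0], rule exI[of _ 1]) simp
  then show "Aop V (\<lambda>x. complex_of_real x - 1/2) (\<lambda>x. 0)"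
    by simp
qed

lemma is_eigenvalue_0_iff: "is_eigenvalue V 0 \<longleftrightarrow> V = 2 * \<i>"
proof
  assume "is_eigenvalue V 0"
  then show "V = 2 * \<i>"
    unfolding is_eigenvalue_def using Aop_kernel_trivial by blast
next
  assume "V = 2 * \<i>"
  then have "Aop V (\<lambda>x. 1) (\<lambda>x. 0)"
    by (rule Aop_2i_eigenfunctions)
  moreover have "\<not> L2zero (\<lambda>x. 1)"
    by (rule not_L2zero_if_nonzero_on[of 0 1]) auto
  ultimately show "is_eigenvalue V 0"
    unfolding is_eigenvalue_def by auto
qed

theorem proposition6p1:
  fixes V :: complex
  shows "(is_eigenvalue V 0 \<longleftrightarrow> V = 2 * \<i>) \<and>
    (V = 2 * \<i> \<longrightarrow>
      (\<forall>psi. Aop V psi (\<lambda>x. 0 * psi x) \<longleftrightarrow>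
          (\<exists>c1 c2. \<forall>x\<in>{0..1}. psi x = c1 * 1 + c2 * (complex_of_real x - 1/2))) \<and>
      (\<forall>psi chi. Aop V psi chi \<and> Aop V chi (\<lambda>x. 0 * chi x) \<longrightarrow> Aop V psi (\<lambda>x. 0 * psi x)) \<and>
      Aop V (\<lambda>x. 1) (\<lambda>x. 0) \<and>
      Aop V (\<lambda>x. complex_of_real x - 1/2) (\<lambda>x. 0) \<and>
      L2ip (\<lambda>x. 1) (\<lambda>x. complex_of_real x - 1/2) = 0 \<and>
      \<not> L2zero (\<lambda>x. 1) \<and> \<not> L2zero (\<lambda>x. complex_of_real x - 1/2))"
proof -
  have "L2ip (\<lambda>x. 1) (\<lambda>x. complex_of_real x - 1/2) = 0"
  proof -
    have "L2ip (\<lambda>x. 1) (\<lambda>x. complex_of_real x - 1/2)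
        = (LINT t:{0..1}|lborel. - 1/2 + 1 * complex_of_real t + 0 * (complex_of_real t)\<^sup>2)"
      unfolding L2ip_def by (rule set_lebesgue_integral_cong) auto
    also have "\<dots> = 0"
      by (subst set_integral_quadratic) auto
    finally show ?thesis .
  qed
  moreover have "\<not> L2zero (\<lambda>x. 1)"
    by (rule not_L2zero_if_nonzero_on[of 0 1]) auto
  moreover have "\<not> L2zero (\<lambda>x. complex_of_real x - 1/2)"
    by (rule not_L2zero_if_nonzero_on[of 0 "1/2"]) (auto simp: complex_eq_iff)
  ultimately show ?thesis
    using is_eigenvalue_0_iff Aop_2i_kernel_iff_affine Aop_2i_no_Jordan_chain
      Aop_2i_eigenfunctions by blast
qed

end
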